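(* Let $(U_0,\dots,U_n)$ be the urn process. For $0\le k\le l\le n$, \[ \mathbf E(U_k)=\frac{k(n-k)}{n-1},\qquad \mathbf{Cov}(U_k,U_l)=\frac{k(k-1)(n-l)(n-l-1)}{(n-1)^2(n-2)}. \]
   Context: Urn process: let $n\ge3$. An urn initially contains $n$ black balls. It is emptied in $n$ steps: in each of the first $n-1$ steps a uniformly random pair of balls is removed from the urn and replaced by one red ball; in step $n$ the last remaining ball is removed. $U_k$ is the number of red balls in the urn after $k$ steps, $0\le k\le n$. Equivalently, $(U_k)$ is the Markov chain with $U_0=0$ and $\mathbf P(U_{k+1}=u-1\mid U_k=u)=\binom u2/\binom{n-k}2$, $\mathbf P(U_{k+1}=u\mid U_k=u)=u(n-k-u)/\binom{n-k}2$, $\mathbf P(U_{k+1}=u+1\mid U_k=u)=\binom{n-k-u}2/\binom{n-k}2$ (for $k\le n-2$), and $U_n=0$. *)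

theory Defs
  imports "HOL-Probability.Probability"
begin

text \<open>After k steps the urn holds n - k balls, of which
  u are red; balls are labelled 0..<n-k, the red ones being 0..<u. For k+2 \<le> n a
  uniformly random 2-element subset of the balls is removed and replaced by one red
  ball; the new number of red balls is u + 1 - (number of red balls removed).
  In step n (k = n-1) the last ball is removed, so U_n = 0.\<close>
definition urn_step :: "nat \<Rightarrow> nat \<Rightarrow> nat \<Rightarrow> nat pmf" where
  "urn_step n k u =
     (if k + 2 \<le> n then
        map_pmf (\<lambda>S. u + 1 - card (S \<inter> {..<u}))
          (pmf_of_set {S. S \<subseteq> {..<n - k} \<and> card S = 2})
      else return_pmf 0)"

fun urn_path :: "nat \<Rightarrow> nat \<Rightarrow> nat list pmf" where
  "urn_path n 0 = return_pmf [0]"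
| "urn_path n (Suc k) =
     bind_pmf (urn_path n k) (\<lambda>xs. map_pmf (\<lambda>u'. xs @ [u']) (urn_step n k (last xs)))"

text \<open>The full urn process (U_0, ..., U_n): the list xs with U_k = xs ! k.\<close>
definition urn :: "nat \<Rightarrow> nat list pmf" where
  "urn n = urn_path n n"

definition pmf_cov :: "'a pmf \<Rightarrow> ('a \<Rightarrow> real) \<Rightarrow> ('a \<Rightarrow> real) \<Rightarrow> real" where
  "pmf_cov p X Y =
     measure_pmf.expectation p
       (\<lambda>x. (X x - measure_pmf.expectation p X) * (Y x - measure_pmf.expectation p Y))"

end

theory Submission
  imports Defs
begin

(* Conditionally on U_j = u, step j+1 removes a uniform 2-subset S of the M = n - j balls, and
   U_{j+1} = u + 1 - |S \<inter> R| where R is the set of u red balls.  Counting how many 2-subsets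
   contain a given ball (M - 1) or a given pair of balls (1) yields the conditional moments
     E[U_{j+1} | U_j = u]   = u (M-2)/M + 1,
     E[U_{j+1}^2 | U_j = u] = u^2 (M-2)(M-3)/(M(M-1)) + 2u (M-2)/(M-1) + 1.
   Hence E[U_{k+1}], E[U_{k+1}^2] and E[U_k U_{l+1}] (k \<le> l) satisfy linear recurrences in
   E[U_k], E[U_k^2] and E[U_k U_l], E[U_k]; the closed forms of the theorem solve them, which is
   checked by induction for all indices below n.  The last value U_n is 0 and is treated apart. *)

section \<open>Uniform 2-subsets of a finite set\<close>

definition two_subsets :: "'a set \<Rightarrow> 'a set set" where
  "two_subsets B = {S. S \<subseteq> B \<and> card S = 2}"

lemma finite_two_subsets: "finite B \<Longrightarrow> finite (two_subsets B)"
  unfolding two_subsets_def by (rule finite_subset[of _ "Pow B"]) auto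

lemma two_subsets_lessThan_nonempty: "2 \<le> (M :: nat) \<Longrightarrow> two_subsets {..<M} \<noteq> {}"
proof -
  assume "2 \<le> M"
  hence "{0, 1} \<in> two_subsets {..<M}" by (auto simp: two_subsets_def)
  thus ?thesis by blast
qed

lemma card_two_subsets:
  assumes "finite B"
  shows "real (card (two_subsets B)) = real (card B) * (real (card B) - 1) / 2"
proof -
  have "card (two_subsets B) = card B choose 2"
    unfolding two_subsets_def using n_subsets[OF assms, of 2] by simp
  moreover have "even (card B * (card B - 1))" by auto
  ultimately have "2 * card (two_subsets B) = card B * (card B - 1)"
    by (simp add: choose_two dvd_mult_div_cancel)
  hence "real (2 * card (two_subsets B)) = real (card B * (card B - 1))" by (rule arg_cong)
  thus ?thesis by (cases "card B") (simp_all add: algebra_simps)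
qed

lemma two_subsets_containing:
  assumes "x \<in> B"
  shows "{S \<in> two_subsets B. x \<in> S} = (\<lambda>y. {x, y}) ` (B - {x})"
proof (intro set_eqI iffI)
  fix S assume "S \<in> {S \<in> two_subsets B. x \<in> S}"
  then obtain y where "S = {x, y}" "y \<in> B - {x}"
    unfolding two_subsets_def by (auto simp: card_2_iff doubleton_eq_iff)
  thus "S \<in> (\<lambda>y. {x, y}) ` (B - {x})" by blast
qed (use assms in \<open>auto simp: two_subsets_def\<close>)

lemma pair_incidence:
  assumes "finite B" "x \<in> B" "y \<in> B"
  shows "(\<Sum>S\<in>two_subsets B. of_bool (x \<in> S \<and> y \<in> S) :: real)
           = (if x = y then real (card B) - 1 else 1)"
proof -
  have "(\<Sum>S\<in>two_subsets B. of_bool (x \<in> S \<and> y \<in> S) :: real)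
          = real (card {S \<in> two_subsets B. x \<in> S \<and> y \<in> S})"
    using finite_two_subsets[OF assms(1)] by (simp add: Int_def)
  also have "\<dots> = (if x = y then real (card B) - 1 else 1)"
  proof (cases "x = y")
    case True
    have "inj_on (\<lambda>z. {x, z}) (B - {x})" by (auto simp: inj_on_def doubleton_eq_iff)
    hence "card {S \<in> two_subsets B. x \<in> S} = card (B - {x})"
      using two_subsets_containing[OF assms(2)] by (simp add: card_image)
    moreover have "card B > 0" using assms(1,2) card_gt_0_iff by blast
    ultimately show ?thesis using True assms(1,2) by (simp add: of_nat_diff)
  next
    case False
    have "{S \<in> two_subsets B. x \<in> S \<and> y \<in> S} = {{x, y}}"
    proof (intro set_eqI iffI)
      fix S assume "S \<in> {S \<in> two_subsets B. x \<in> S \<and> y \<in> S}"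
      hence "card S = 2" "{x, y} \<subseteq> S" by (auto simp: two_subsets_def)
      moreover from this have "finite S" by (intro card_ge_0_finite) simp
      ultimately have "{x, y} = S" using False by (intro card_subset_eq) auto
      thus "S \<in> {{x, y}}" by simp
    qed (use assms False in \<open>auto simp: two_subsets_def\<close>)
    with False show ?thesis by simp
  qed
  finally show ?thesis .
qed

text \<open>Counting a set through indicator sums, so that sums over subsets can be exchanged.\<close>
lemma card_Int_as_sum: "finite A \<Longrightarrow> real (card (S \<inter> A)) = (\<Sum>x\<in>A. of_bool (x \<in> S))"
  by (simp add: Int_commute Int_def)

lemma sum_card_Int_two_subsets:
  assumes "finite B" "A \<subseteq> B"
  shows "(\<Sum>S\<in>two_subsets B. real (card (S \<inter> A))) = real (card A) * (real (card B) - 1)"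
proof -
  have A: "finite A" using assms finite_subset by blast
  have "(\<Sum>S\<in>two_subsets B. real (card (S \<inter> A)))
          = (\<Sum>x\<in>A. \<Sum>S\<in>two_subsets B. of_bool (x \<in> S \<and> x \<in> S))"
    by (simp add: card_Int_as_sum[OF A] sum.swap[of _ _ A])
  also have "\<dots> = (\<Sum>x\<in>A. real (card B) - 1)"
  proof (rule sum.cong[OF refl])
    fix x assume "x \<in> A"
    hence "x \<in> B" using assms(2) by auto
    from pair_incidence[OF assms(1) this this]
    show "(\<Sum>S\<in>two_subsets B. of_bool (x \<in> S \<and> x \<in> S)) = real (card B) - 1" by simp
  qed
  finally show ?thesis by simp
qed

lemma sum_card_Int_squared_two_subsets:
  assumes "finite B" "A \<subseteq> B"
  shows "(\<Sum>S\<in>two_subsets B. real (card (S \<inter> A)) ^ 2)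
           = real (card A) * (real (card B) - 1) + real (card A) * (real (card A) - 1)"
proof -
  have A: "finite A" using assms finite_subset by blast
  have "(\<Sum>S\<in>two_subsets B. real (card (S \<inter> A)) ^ 2)
          = (\<Sum>S\<in>two_subsets B. \<Sum>x\<in>A. \<Sum>y\<in>A. of_bool (x \<in> S \<and> y \<in> S))"
    by (simp add: card_Int_as_sum[OF A] power2_eq_square sum_product of_bool_conj)
  also have "\<dots> = (\<Sum>x\<in>A. \<Sum>y\<in>A. \<Sum>S\<in>two_subsets B. of_bool (x \<in> S \<and> y \<in> S))"
    by (simp add: sum.swap[of _ "two_subsets B"])
  also have "\<dots> = (\<Sum>x\<in>A. \<Sum>y\<in>A. (if x = y then real (card B) - 2 else 0) + 1)"
  proof (intro sum.cong refl)
    fix x y assume "x \<in> A" "y \<in> A"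
    hence "x \<in> B" "y \<in> B" using assms(2) by auto
    thus "(\<Sum>S\<in>two_subsets B. of_bool (x \<in> S \<and> y \<in> S))
            = (if x = y then real (card B) - 2 else 0) + 1"
      using pair_incidence[OF assms(1)] by simp
  qed
  also have "\<dots> = (\<Sum>x\<in>A. real (card B) - 2 + real (card A))"
    using A by (simp add: sum.distrib)
  finally show ?thesis by (simp add: algebra_simps)
qed

section \<open>One step of the urn\<close>

lemma urn_step_expectation:
  assumes "j + 2 \<le> n"
  shows "measure_pmf.expectation (urn_step n j u) f
           = (\<Sum>S\<in>two_subsets {..<n - j}. f (u + 1 - card (S \<inter> {..<u})))
             / real (card (two_subsets {..<n - j}))"
  using assms two_subsets_lessThan_nonempty[of "n - j"] finite_two_subsets[of "{..<n - j}"]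
  by (simp add: urn_step_def two_subsets_def[symmetric] integral_pmf_of_set)

lemma urn_step_moments:
  assumes "j + 2 \<le> n" "u + j \<le> n"
  defines "M \<equiv> real n - real j"
  shows "measure_pmf.expectation (urn_step n j u) real = real u * (M - 2) / M + 1"
    and "measure_pmf.expectation (urn_step n j u) (\<lambda>v. real v ^ 2)
           = real u ^ 2 * ((M - 2) * (M - 3) / (M * (M - 1))) + real u * (2 * (M - 2) / (M - 1)) + 1"
proof -
  let ?T = "two_subsets {..<n - j}"
  define r where "r S = real (card (S \<inter> {..<u}))" for S
  have M: "real (n - j) = M" "M \<ge> 2" using assms by (auto simp: of_nat_diff)
  have nz: "M \<noteq> 0" "M - 1 \<noteq> 0" using M(2) by auto
  have uM: "{..<u} \<subseteq> {..<n - j}" using assms by auto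
  have N: "real (card ?T) = M * (M - 1) / 2"
    using card_two_subsets[of "{..<n - j}"] M by simp
  have new_red: "real (u + 1 - card (S \<inter> {..<u})) = real u + 1 - r S" for S
  proof -
    have "card (S \<inter> {..<u}) \<le> u" by (metis card_lessThan card_mono finite_lessThan inf_le2)
    thus ?thesis by (simp add: r_def of_nat_diff)
  qed
  have sum_r: "(\<Sum>S\<in>?T. r S) = real u * (M - 1)"
    using sum_card_Int_two_subsets[OF _ uM] M by (simp add: r_def)
  have sum_r2: "(\<Sum>S\<in>?T. r S ^ 2) = real u * (M - 1) + real u * (real u - 1)"
    using sum_card_Int_squared_two_subsets[OF _ uM] M by (simp add: r_def)
  have sum1: "(\<Sum>S\<in>?T. real (u + 1 - card (S \<inter> {..<u})))
          = real (card ?T) * (real u + 1) - real u * (M - 1)"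
    unfolding new_red by (simp add: sum_subtractf sum_r)
  show "measure_pmf.expectation (urn_step n j u) real = real u * (M - 2) / M + 1"
    unfolding urn_step_expectation[OF assms(1)] sum1 N using nz by (simp add: field_simps)
  have "(\<Sum>S\<in>?T. real (u + 1 - card (S \<inter> {..<u})) ^ 2)
          = (\<Sum>S\<in>?T. (real u + 1) ^ 2 - 2 * (real u + 1) * r S + r S ^ 2)"
    unfolding new_red by (simp add: power2_eq_square algebra_simps)
  also have "\<dots> = real (card ?T) * (real u + 1) ^ 2 - 2 * (real u + 1) * (real u * (M - 1))
                    + (real u * (M - 1) + real u * (real u - 1))"
    by (simp add: sum.distrib sum_subtractf sum_r sum_r2 flip: sum_distrib_left)
  finally have sum2: "(\<Sum>S\<in>?T. real (u + 1 - card (S \<inter> {..<u})) ^ 2)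
      = real (card ?T) * (real u + 1) ^ 2 - 2 * (real u + 1) * (real u * (M - 1))
          + (real u * (M - 1) + real u * (real u - 1))" .
  show "measure_pmf.expectation (urn_step n j u) (\<lambda>v. real v ^ 2)
           = real u ^ 2 * ((M - 2) * (M - 3) / (M * (M - 1))) + real u * (2 * (M - 2) / (M - 1)) + 1"
    unfolding urn_step_expectation[OF assms(1)] sum2 N using nz by (simp add: divide_simps) algebra
qed

text \<open>Support of one step; it is finite, so all expectations below are finite sums.\<close>
lemma set_urn_step:
  assumes "j + 2 \<le> n"
  shows "set_pmf (urn_step n j u) = (\<lambda>S. u + 1 - card (S \<inter> {..<u})) ` two_subsets {..<n - j}"
  using assms two_subsets_lessThan_nonempty[of "n - j"] finite_two_subsets[of "{..<n - j}"]
  by (simp add: urn_step_def two_subsets_def[symmetric])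

lemma finite_urn_step: "finite (set_pmf (urn_step n j u))"
proof (cases "j + 2 \<le> n")
  case True
  thus ?thesis unfolding set_urn_step[OF True] by (simp add: finite_two_subsets)
next
  case False
  thus ?thesis by (simp add: urn_step_def)
qed

lemma urn_step_bound:
  assumes "v \<in> set_pmf (urn_step n j u)" "u + j \<le> n" "j < n"
  shows "v + Suc j \<le> n"
proof (cases "j + 2 \<le> n")
  case True
  then obtain S where S: "S \<subseteq> {..<n - j}" "card S = 2" "v = u + 1 - card (S \<inter> {..<u})"
    using assms(1) by (auto simp: set_urn_step two_subsets_def)
  have "finite S" using S(1) finite_subset by blast
  hence "card S = card (S \<inter> {..<u}) + card (S - {..<u})" by (rule card_Int_Diff)
  moreover have "card (S - {..<u}) \<le> n - j - u"
    using S(1) card_mono[of "{u..<n - j}" "S - {..<u}"] by fastforce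
  ultimately show ?thesis using S(2,3) assms(2) True by linarith
next
  case False
  thus ?thesis using assms by (auto simp: urn_step_def)
qed

lemma expectation_cong_support:
  "(\<And>x. x \<in> set_pmf p \<Longrightarrow> f x = g x) \<Longrightarrow>
     measure_pmf.expectation p f = measure_pmf.expectation p (g :: _ \<Rightarrow> real)"
  by (rule integral_cong_AE) (auto simp: AE_measure_pmf_iff)

lemma expectation_bind_finite:
  assumes "finite (set_pmf p)" "\<And>x. x \<in> set_pmf p \<Longrightarrow> finite (set_pmf (f x))"
  shows "measure_pmf.expectation (bind_pmf p f) (h :: _ \<Rightarrow> real)
           = measure_pmf.expectation p (\<lambda>x. measure_pmf.expectation (f x) h)"
  using assms
  by (subst pmf_expectation_bind[of "set_pmf p"], simp_all,
      subst integral_measure_pmf[of "set_pmf p"], simp_all)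

lemma pmf_cov_finite_support:
  assumes "finite (set_pmf p)"
  shows "pmf_cov p X Y = measure_pmf.expectation p (\<lambda>x. X x * Y x)
           - measure_pmf.expectation p X * measure_pmf.expectation p Y"
proof -
  define a b where "a = measure_pmf.expectation p X" and "b = measure_pmf.expectation p Y"
  have int: "integrable (measure_pmf p) f" for f :: "_ \<Rightarrow> real"
    using assms by (rule integrable_measure_pmf_finite)
  have "pmf_cov p X Y = measure_pmf.expectation p (\<lambda>x. X x * Y x - X x * b - a * Y x + a * b)"
    unfolding pmf_cov_def a_def[symmetric] b_def[symmetric] by (simp add: algebra_simps)
  also have "\<dots> = measure_pmf.expectation p (\<lambda>x. X x * Y x) - a * b"
    by (simp add: int a_def b_def)
  finally show ?thesis unfolding a_def b_def .
qed

section \<open>The path distribution\<close>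

lemma urn_path_length: "xs \<in> set_pmf (urn_path n j) \<Longrightarrow> length xs = Suc j"
  by (induction j arbitrary: xs) auto

lemma urn_path_last: "xs \<in> set_pmf (urn_path n j) \<Longrightarrow> last xs = xs ! j"
proof -
  assume "xs \<in> set_pmf (urn_path n j)"
  hence "length xs = Suc j" by (rule urn_path_length)
  moreover from this have "xs \<noteq> []" by auto
  ultimately show ?thesis by (simp add: last_conv_nth)
qed

lemma finite_urn_path: "finite (set_pmf (urn_path n j))"
  by (induction j) (auto simp: finite_urn_step)

lemma integrable_urn_path [simp]: "integrable (measure_pmf (urn_path n j)) (f :: _ \<Rightarrow> real)"
  by (rule integrable_measure_pmf_finite[OF finite_urn_path])

lemma urn_path_bound:
  "xs \<in> set_pmf (urn_path n j) \<Longrightarrow> j \<le> n \<Longrightarrow> i \<le> j \<Longrightarrow> xs ! i + i \<le> n"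
proof (induction j arbitrary: xs i)
  case 0
  thus ?case by auto
next
  case (Suc j)
  then obtain ys v where ys: "ys \<in> set_pmf (urn_path n j)" "xs = ys @ [v]"
    and v: "v \<in> set_pmf (urn_step n j (last ys))" by auto
  have len: "length ys = Suc j" using urn_path_length[OF ys(1)] .
  show ?case
  proof (cases "i = Suc j")
    case True
    have "last ys + j \<le> n" using Suc.IH[OF ys(1)] Suc.prems urn_path_last[OF ys(1)] by simp
    hence "v + Suc j \<le> n" using urn_step_bound[OF v] Suc.prems by simp
    thus ?thesis using True ys(2) len by (simp add: nth_append)
  next
    case False
    thus ?thesis using Suc.IH[OF ys(1)] Suc.prems ys(2) len by (simp add: nth_append)
  qed
qed

lemma urn_last_zero: "xs \<in> set_pmf (urn n) \<Longrightarrow> xs ! n = 0"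
  using urn_path_bound[of xs n n n] by (simp add: urn_def)

lemma urn_path_prefix_Suc: "map_pmf (take (Suc j)) (urn_path n (Suc j)) = urn_path n j"
proof -
  have "map_pmf (take (Suc j)) (urn_path n (Suc j))
          = bind_pmf (urn_path n j) (\<lambda>xs. map_pmf (\<lambda>_. xs) (urn_step n j (last xs)))"
    unfolding urn_path.simps map_bind_pmf pmf.map_comp o_def
    by (intro bind_pmf_cong refl) (simp add: urn_path_length)
  also have "\<dots> = urn_path n j"
    by (simp add: map_pmf_const bind_return_pmf')
  finally show ?thesis .
qed

lemma urn_path_prefix: "i \<le> j \<Longrightarrow> map_pmf (take (Suc i)) (urn_path n j) = urn_path n i"
proof (induction j rule: dec_induct)
  case base
  have "map_pmf (take (Suc i)) (urn_path n i) = map_pmf id (urn_path n i)"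
    using urn_path_length by (intro pmf.map_cong refl) fastforce
  thus ?case by simp
next
  case (step j)
  have "map_pmf (take (Suc i)) (urn_path n (Suc j))
          = map_pmf (take (Suc i)) (map_pmf (take (Suc j)) (urn_path n (Suc j)))"
    using step.hyps by (simp add: pmf.map_comp o_def min_absorb1 del: urn_path.simps)
  thus ?case using step.IH by (simp only: urn_path_prefix_Suc)
qed

lemma expectation_urn_path_prefix:
  "i \<le> j \<Longrightarrow> measure_pmf.expectation (urn_path n j) (\<lambda>xs. f (take (Suc i) xs))
                = measure_pmf.expectation (urn_path n i) (f :: _ \<Rightarrow> real)"
  by (subst urn_path_prefix[symmetric]) simp_all

text \<open>Conditioning on the path up to time \<open>j\<close>: to compute an expectation at time \<open>j+1\<close> it suffices
  to know its conditional value \<open>g\<close> given the path so far.\<close>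
lemma expectation_urn_path_Suc:
  assumes "\<And>xs. xs \<in> set_pmf (urn_path n j) \<Longrightarrow>
             measure_pmf.expectation (urn_step n j (xs ! j)) (\<lambda>v. h (xs @ [v])) = g xs"
  shows "measure_pmf.expectation (urn_path n (Suc j)) h
           = measure_pmf.expectation (urn_path n j) (g :: _ \<Rightarrow> real)"
proof -
  have "measure_pmf.expectation (urn_path n (Suc j)) h
          = measure_pmf.expectation (urn_path n j)
              (\<lambda>xs. measure_pmf.expectation (urn_step n j (last xs)) (\<lambda>v. h (xs @ [v])))"
    by (simp add: expectation_bind_finite finite_urn_path finite_urn_step)
  also have "\<dots> = measure_pmf.expectation (urn_path n j) g"
  proof (rule expectation_cong_support)
    fix xs assume xs: "xs \<in> set_pmf (urn_path n j)"
    show "measure_pmf.expectation (urn_step n j (last xs)) (\<lambda>v. h (xs @ [v])) = g xs"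
      using assms[OF xs] by (simp add: urn_path_last[OF xs])
  qed
  finally show ?thesis .
qed

section \<open>Closed forms of the moments\<close>

definition mean_formula :: "real \<Rightarrow> real \<Rightarrow> real" where
  "mean_formula N K = K * (N - K) / (N - 1)"

definition cov_formula :: "real \<Rightarrow> real \<Rightarrow> real \<Rightarrow> real" where
  "cov_formula N K L = K * (K - 1) * (N - L) * (N - L - 1) / ((N - 1)^2 * (N - 2))"

text \<open>The closed forms satisfy the recurrences coming from one urn step.\<close>
lemma mean_formula_step:
  assumes "N \<noteq> 1" "N - K \<noteq> 0"
  shows "mean_formula N K * ((N - K - 2) / (N - K)) + 1 = mean_formula N (K + 1)"
proof -
  have "N - 1 \<noteq> 0" using assms by simp
  with assms(2) show ?thesis
    unfolding mean_formula_def by (simp add: divide_simps) (simp add: algebra_simps)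
qed

lemma cov_formula_step:
  assumes "N - L \<noteq> 0"
  shows "cov_formula N K L * ((N - L - 2) / (N - L)) = cov_formula N K (L + 1)"
  using assms unfolding cov_formula_def by (simp add: divide_simps)

lemma second_moment_formula_step:
  assumes "N \<noteq> 1" "N \<noteq> 2" "N - K \<noteq> 0" "N - K - 1 \<noteq> 0"
  shows "(cov_formula N K K + mean_formula N K ^ 2) * ((N - K - 2) * (N - K - 3) / ((N - K) * (N - K - 1)))
           + mean_formula N K * (2 * (N - K - 2) / (N - K - 1)) + 1
         = cov_formula N (K + 1) (K + 1) + mean_formula N (K + 1) ^ 2"
proof -
  have "N - 1 \<noteq> 0" "N - 2 \<noteq> 0" using assms by auto
  with assms(3,4) show ?thesis
    unfolding mean_formula_def cov_formula_def
    by (simp add: divide_simps) (simp add: algebra_simps power2_eq_square)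
qed

lemma urn_path_mean:
  assumes "n \<ge> 3" "k < n"
  shows "measure_pmf.expectation (urn_path n k) (\<lambda>xs. real (xs ! k)) = mean_formula n k"
  using assms(2)
proof (induction k)
  case 0
  show ?case by (simp add: mean_formula_def)
next
  case (Suc k)
  define M where "M = real n - real k"
  have "measure_pmf.expectation (urn_path n (Suc k)) (\<lambda>xs. real (xs ! Suc k))
          = measure_pmf.expectation (urn_path n k) (\<lambda>xs. real (xs ! k) * ((M - 2) / M) + 1)"
  proof (rule expectation_urn_path_Suc)
    fix xs assume xs: "xs \<in> set_pmf (urn_path n k)"
    have "xs ! k + k \<le> n" using urn_path_bound[OF xs] Suc.prems by simp
    thus "measure_pmf.expectation (urn_step n k (xs ! k)) (\<lambda>v. real ((xs @ [v]) ! Suc k))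
            = real (xs ! k) * ((M - 2) / M) + 1"
      using urn_step_moments(1)[of k n "xs ! k"] Suc.prems urn_path_length[OF xs]
      by (simp add: M_def nth_append)
  qed
  also have "\<dots> = mean_formula n k * ((M - 2) / M) + 1"
    using Suc by simp
  also have "\<dots> = mean_formula n (Suc k)"
    using mean_formula_step[of n k] assms(1) Suc.prems by (simp add: M_def add.commute)
  finally show ?case .
qed

lemma urn_path_second_moment:
  assumes "n \<ge> 3" "k < n"
  shows "measure_pmf.expectation (urn_path n k) (\<lambda>xs. real (xs ! k) ^ 2)
           = cov_formula n k k + mean_formula n k ^ 2"
  using assms(2)
proof (induction k)
  case 0
  show ?case by (simp add: mean_formula_def cov_formula_def)
next
  case (Suc k)
  define M where "M = real n - real k"
  define a b where "a = (M - 2) * (M - 3) / (M * (M - 1))" and "b = 2 * (M - 2) / (M - 1)"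
  have "measure_pmf.expectation (urn_path n (Suc k)) (\<lambda>xs. real (xs ! Suc k) ^ 2)
          = measure_pmf.expectation (urn_path n k) (\<lambda>xs. real (xs ! k) ^ 2 * a + real (xs ! k) * b + 1)"
  proof (rule expectation_urn_path_Suc)
    fix xs assume xs: "xs \<in> set_pmf (urn_path n k)"
    have "xs ! k + k \<le> n" using urn_path_bound[OF xs] Suc.prems by simp
    thus "measure_pmf.expectation (urn_step n k (xs ! k)) (\<lambda>v. real ((xs @ [v]) ! Suc k) ^ 2)
            = real (xs ! k) ^ 2 * a + real (xs ! k) * b + 1"
      using urn_step_moments(2)[of k n "xs ! k"] Suc.prems urn_path_length[OF xs]
      by (simp add: M_def a_def b_def nth_append)
  qed
  also have "\<dots> = (cov_formula n k k + mean_formula n k ^ 2) * a + mean_formula n k * b + 1"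
    using Suc urn_path_mean[OF assms(1)] by simp
  also have "\<dots> = cov_formula n (Suc k) (Suc k) + mean_formula n (Suc k) ^ 2"
    using second_moment_formula_step[of n k] assms(1) Suc.prems
    by (simp add: M_def a_def b_def add.commute)
  finally show ?case .
qed

lemma urn_path_product_moment:
  assumes "n \<ge> 3" "k \<le> l" "l < n"
  shows "measure_pmf.expectation (urn_path n l) (\<lambda>xs. real (xs ! k) * real (xs ! l))
           = cov_formula n k l + mean_formula n k * mean_formula n l"
  using assms(2,3)
proof (induction l rule: dec_induct)
  case base
  thus ?case using urn_path_second_moment[OF assms(1)] by (simp add: power2_eq_square)
next
  case (step l)
  define M where "M = real n - real l"
  have "measure_pmf.expectation (urn_path n (Suc l)) (\<lambda>xs. real (xs ! k) * real (xs ! Suc l))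
          = measure_pmf.expectation (urn_path n l)
              (\<lambda>xs. real (xs ! k) * real (xs ! l) * ((M - 2) / M) + real (xs ! k))"
  proof (rule expectation_urn_path_Suc)
    fix xs assume xs: "xs \<in> set_pmf (urn_path n l)"
    have "xs ! l + l \<le> n" using urn_path_bound[OF xs] step.prems by simp
    hence "measure_pmf.expectation (urn_step n l (xs ! l)) real = real (xs ! l) * ((M - 2) / M) + 1"
      using urn_step_moments(1)[of l n "xs ! l"] step.prems by (simp add: M_def)
    thus "measure_pmf.expectation (urn_step n l (xs ! l))
              (\<lambda>v. real ((xs @ [v]) ! k) * real ((xs @ [v]) ! Suc l))
            = real (xs ! k) * real (xs ! l) * ((M - 2) / M) + real (xs ! k)"
      using step.hyps urn_path_length[OF xs] by (simp add: nth_append algebra_simps)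
  qed
  also have "\<dots> = (cov_formula n k l + mean_formula n k * mean_formula n l) * ((M - 2) / M)
                    + mean_formula n k"
  proof -
    have "measure_pmf.expectation (urn_path n l) (\<lambda>xs. real (xs ! k))
            = measure_pmf.expectation (urn_path n k) (\<lambda>xs. real (xs ! k))"
      using expectation_urn_path_prefix[OF step.hyps(1), of n "\<lambda>xs. real (xs ! k)"] by simp
    thus ?thesis using step urn_path_mean[OF assms(1)] by simp
  qed
  also have "\<dots> = cov_formula n k l * ((M - 2) / M)
                    + mean_formula n k * (mean_formula n l * ((M - 2) / M) + 1)"
    by (simp add: algebra_simps)
  also have "\<dots> = cov_formula n k (Suc l) + mean_formula n k * mean_formula n (Suc l)"
    using cov_formula_step[of n l k] mean_formula_step[of n l] assms(1) step.prems
    by (simp add: M_def add.commute)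
  finally show ?case .
qed

text \<open>Transfer to the full process; the index \<open>n\<close> is covered by \<open>U_n = 0\<close>.\<close>
lemma urn_mean:
  assumes "n \<ge> 3" "k \<le> n"
  shows "measure_pmf.expectation (urn n) (\<lambda>xs. real (xs ! k)) = mean_formula n k"
proof (cases "k = n")
  case True
  have "measure_pmf.expectation (urn n) (\<lambda>xs. real (xs ! k)) = measure_pmf.expectation (urn n) (\<lambda>_. 0)"
  proof (rule expectation_cong_support)
    fix xs assume "xs \<in> set_pmf (urn n)"
    thus "real (xs ! k) = 0" using urn_last_zero True by simp
  qed
  thus ?thesis using True by (simp add: mean_formula_def)
next
  case False
  have "measure_pmf.expectation (urn n) (\<lambda>xs. real (xs ! k))
          = measure_pmf.expectation (urn_path n k) (\<lambda>xs. real (xs ! k))"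
    using expectation_urn_path_prefix[OF assms(2), of n "\<lambda>xs. real (xs ! k)"] by (simp add: urn_def)
  thus ?thesis using urn_path_mean[OF assms(1)] False assms(2) by simp
qed

lemma urn_product_moment:
  assumes "n \<ge> 3" "k \<le> l" "l \<le> n"
  shows "measure_pmf.expectation (urn n) (\<lambda>xs. real (xs ! k) * real (xs ! l))
           = cov_formula n k l + mean_formula n k * mean_formula n l"
proof (cases "l = n")
  case True
  have "measure_pmf.expectation (urn n) (\<lambda>xs. real (xs ! k) * real (xs ! l))
          = measure_pmf.expectation (urn n) (\<lambda>_. 0)"
  proof (rule expectation_cong_support)
    fix xs assume "xs \<in> set_pmf (urn n)"
    hence "xs ! l = 0" using urn_last_zero True by simp
    thus "real (xs ! k) * real (xs ! l) = 0" by simp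
  qed
  thus ?thesis using True by (simp add: mean_formula_def cov_formula_def)
next
  case False
  have "measure_pmf.expectation (urn n) (\<lambda>xs. real (xs ! k) * real (xs ! l))
          = measure_pmf.expectation (urn_path n l) (\<lambda>xs. real (xs ! k) * real (xs ! l))"
    using expectation_urn_path_prefix[OF assms(3), of n "\<lambda>xs. real (xs ! k) * real (xs ! l)"]
      assms(2) by (simp add: urn_def)
  thus ?thesis using urn_path_product_moment[OF assms(1,2)] False assms(3) by simp
qed

theorem proposition6:
  fixes n k l :: nat
  assumes "n \<ge> 3" and "k \<le> l" and "l \<le> n"
  shows "measure_pmf.expectation (urn n) (\<lambda>xs. real (xs ! k))
           = real k * (real n - real k) / (real n - 1)
         \<and> pmf_cov (urn n) (\<lambda>xs. real (xs ! k)) (\<lambda>xs. real (xs ! l))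
           = real k * (real k - 1) * (real n - real l) * (real n - real l - 1)
             / ((real n - 1)^2 * (real n - 2))"
proof
  have "k \<le> n" using assms by simp
  from urn_mean[OF assms(1) this]
  show "measure_pmf.expectation (urn n) (\<lambda>xs. real (xs ! k))
          = real k * (real n - real k) / (real n - 1)"
    by (simp add: mean_formula_def)
  have "pmf_cov (urn n) (\<lambda>xs. real (xs ! k)) (\<lambda>xs. real (xs ! l))
          = (cov_formula n k l + mean_formula n k * mean_formula n l)
            - mean_formula n k * mean_formula n l"
    using pmf_cov_finite_support[OF finite_urn_path[of n n, folded urn_def]]
      urn_product_moment[OF assms] urn_mean[OF assms(1) \<open>k \<le> n\<close>] urn_mean[OF assms(1,3)]
    by simp
  thus "pmf_cov (urn n) (\<lambda>xs. real (xs ! k)) (\<lambda>xs. real (xs ! l))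
          = real k * (real k - 1) * (real n - real l) * (real n - real l - 1)
             / ((real n - 1)^2 * (real n - 2))"
    by (simp add: cov_formula_def)
qed

end
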